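(* Under the standing assumptions below, suppose $3\sigma>2L$, $0<\gamma<\frac{3\sigma-2L}{L^2}$, and that the sequence $\{(y^t,z^t,x^t)\}$ generated by the PR splitting iteration has a cluster point $(y^*,z^*,x^* )$. Suppose also that $\mathcal{P}_\gamma$ is a KL function. Then the whole sequence $\{(y^t,z^t,x^t)\}$ is convergent.
   Context: Standing assumptions: $f:\mathbb{R}^n\to\mathbb{R}$ is differentiable and strongly convex with modulus at least $\sigma>0$ (i.e. $f-\frac{\sigma}{2}\|\cdot\|^2$ is convex), and $\nabla f$ is Lipschitz continuous with modulus at most $L>0$. The function $g:\mathbb{R}^n\to(-\infty,\infty]$ is proper and lower semicontinuous, and for the $\gamma>0$ used, $\operatorname{Argmin}_u\{\gamma g(u)+\frac12\|u-w\|^2\}$ is nonempty for every $w\in\mathbb{R}^n$. PR splitting iteration: given $x^0$ and $\gamma>0$, for $t=0,1,2,\dots$: $y^{t+1}=\operatorname{argmin}_y\{f(y)+\frac{1}{2\gamma}\|y-x^t\|^2\}$; $z^{t+1}\in\operatorname{Argmin}_z\{g(z)+\frac{1}{2\gamma}\|2y^{t+1}-x^t-z\|^2\}$; $x^{t+1}=x^t+2(z^{t+1}-y^{t+1})$. Merit function: $\mathcal{P}_\gamma(y,z,x):=f(y)+g(z)-\frac{3}{2\gamma}\|y-z\|^2+\frac{1}{\gamma}\langle x-y,z-y\rangle$. KL function: a proper lower semicontinuous $h$ is a KL function if it has the Kurdyka–Łojasiewicz property at every point $\bar w$ of $\operatorname{dom}\partial h$, i.e. there exist $\eta\in(0,\infty]$,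 a neighborhood $U$ of $\bar w$ and a continuous concave $\varphi:[0,\eta)\to[0,\infty)$ with $\varphi(0)=0$, $\varphi$ continuously differentiable on $(0,\eta)$ with $\varphi'>0$, such that $\varphi'(h(w)-h(\bar w))\operatorname{dist}(0,\partial h(w))\ge1$ for all $w\in U$ with $h(\bar w)<h(w)<h(\bar w)+\eta$ ($\partial$ the limiting subdifferential). *)

theory Defs
  imports "HOL-Analysis.Analysis" "HOL-Library.Extended_Real"
begin

definition proper_fun :: "('a \<Rightarrow> ereal) \<Rightarrow> bool" where
  "proper_fun h \<longleftrightarrow> (\<forall>x. h x \<noteq> -\<infinity>) \<and> (\<exists>x. h x \<noteq> \<infinity>)"

definition lsc_fun :: "('a::topological_space \<Rightarrow> ereal) \<Rightarrow> bool" where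
  "lsc_fun h \<longleftrightarrow> (\<forall>x. h x \<le> Liminf (at x) h)"

text \<open>Frechet (regular) subdifferential: v is a regular subgradient of h at w
  iff h w is finite and liminf_{u -> w, u ~= w} (h u - h w - <v, u - w>)/|u - w| >= 0,
  written out in epsilon-delta form.\<close>

definition frechet_subdiff :: "('a::real_inner \<Rightarrow> ereal) \<Rightarrow> 'a \<Rightarrow> 'a set" where
  "frechet_subdiff h w = {v. \<bar>h w\<bar> \<noteq> \<infinity> \<and>
     (\<forall>\<epsilon>>0. \<exists>\<delta>>0. \<forall>u. norm (u - w) < \<delta> \<longrightarrow>
        h u \<ge> h w + ereal (inner v (u - w) - \<epsilon> * norm (u - w)))}"

definition limiting_subdiff :: "('a::real_inner \<Rightarrow> ereal) \<Rightarrow> 'a \<Rightarrow> 'a set" where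
  "limiting_subdiff h w = {v. \<exists>ws vs. ws \<longlonglongrightarrow> w \<and> (\<lambda>k. h (ws k)) \<longlonglongrightarrow> h w \<and>
     (\<forall>k. vs k \<in> frechet_subdiff h (ws k)) \<and> vs \<longlonglongrightarrow> v}"

text \<open>The condition phi'(h w - h wbar) * dist(0, dh(w)) >= 1 is
  written out as: for every v in dh(w), phi'(h w - h wbar) * |v| >= 1
  (with the usual convention dist(0, {}) = +infinity).\<close>

definition KL_at :: "('a::real_inner \<Rightarrow> ereal) \<Rightarrow> 'a \<Rightarrow> bool" where
  "KL_at h wbar \<longleftrightarrow> (\<exists>(\<eta>::ereal) U (\<phi>::real \<Rightarrow> real) (\<phi>'::real \<Rightarrow> real).
     0 < \<eta> \<and> open U \<and> wbar \<in> U \<and>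
     continuous_on {s. 0 \<le> s \<and> ereal s < \<eta>} \<phi> \<and>
     concave_on {s. 0 \<le> s \<and> ereal s < \<eta>} \<phi> \<and>
     \<phi> 0 = 0 \<and> (\<forall>s. 0 \<le> s \<and> ereal s < \<eta> \<longrightarrow> 0 \<le> \<phi> s) \<and>
     (\<forall>s. 0 < s \<and> ereal s < \<eta> \<longrightarrow> (\<phi> has_real_derivative \<phi>' s) (at s) \<and> 0 < \<phi>' s) \<and>
     continuous_on {s. 0 < s \<and> ereal s < \<eta>} \<phi>' \<and>
     (\<forall>w\<in>U. h wbar < h w \<and> h w < h wbar + \<eta> \<longrightarrow>
        (\<forall>v\<in>limiting_subdiff h w. \<phi>' (real_of_ereal (h w - h wbar)) * norm v \<ge> 1)))"

definition KL_function :: "('a::real_inner \<Rightarrow> ereal) \<Rightarrow> bool" where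
  "KL_function h \<longleftrightarrow> proper_fun h \<and> lsc_fun h \<and>
     (\<forall>wbar. limiting_subdiff h wbar \<noteq> {} \<longrightarrow> KL_at h wbar)"

definition merit :: "('a::real_inner \<Rightarrow> real) \<Rightarrow> ('a \<Rightarrow> ereal) \<Rightarrow> real \<Rightarrow> 'a \<times> 'a \<times> 'a \<Rightarrow> ereal" where
  "merit f g \<gamma> = (\<lambda>(y, z, x). ereal (f y - 3 / (2 * \<gamma>) * (norm (y - z))\<^sup>2
      + (1 / \<gamma>) * inner (x - y) (z - y)) + g z)"

end

theory Submission
  imports Defs
begin

text \<open>
  Optimality of the smooth step gives \<open>x\<^sup>t = y\<^sup>t\<^sup>+\<^sup>1 + \<gamma> \<nabla>f(y\<^sup>t\<^sup>+\<^sup>1)\<close>, so all three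
  components of the iteration are controlled by the increments of \<open>y\<close>. Strong convexity
  and the Lipschitz gradient make the merit function decrease by at least
  \<open>(\<sigma> - \<gamma>L\<^sup>2)/2 \<cdot> |y\<^sup>t\<^sup>+\<^sup>1 - y\<^sup>t|\<^sup>2\<close> per step (positive since \<open>\<sigma> \<le> L\<close> and
  \<open>\<gamma>L\<^sup>2 < 3\<sigma> - 2L\<close>), while an explicit Frechet subgradient of the merit function at the
  iterate has norm \<open>O(|y\<^sup>t\<^sup>+\<^sup>1 - y\<^sup>t|)\<close>. Along the subsequence tending to the cluster point
  the merit values converge (lower semicontinuity of \<open>g\<close> against optimality of the prox
  step), and the Kurdyka-Lojasiewicz inequality at the cluster point converts the
  square-summable increments into summable ones, in the manner of Attouch, Bolte and Svaiter.
  Hence the iterates have finite length and converge.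
\<close>

section \<open>Smooth strongly convex functions\<close>

lemma strongly_convex_gradient_inequality:
  fixes f :: "'a::real_inner \<Rightarrow> real" and gradf :: "'a \<Rightarrow> 'a"
  assumes f_grad: "\<And>u. (f has_derivative (\<lambda>h. inner (gradf u) h)) (at u)"
    and strongly_convex: "convex_on UNIV (\<lambda>u. f u - \<sigma> / 2 * (norm u)\<^sup>2)"
  shows "f u \<ge> f v + inner (gradf v) (u - v) + \<sigma> / 2 * (norm (u - v))\<^sup>2"
proof -
  define F where "F u = f u - \<sigma> / 2 * (norm u)\<^sup>2" for u
  define \<psi> where "\<psi> t = F (v + t *\<^sub>R (u - v))" for t :: real
  have "convex_on UNIV \<psi>"
  proof (rule convex_onI)
    fix t a b :: real assume t: "0 < t" "t < 1"
    have "v + ((1 - t) * a + t * b) *\<^sub>R (u - v) = (1 - t) *\<^sub>R (v + a *\<^sub>R (u - v)) + t *\<^sub>R (v + b *\<^sub>R (u - v))"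
      by (simp add: algebra_simps)
    then show "\<psi> ((1 - t) *\<^sub>R a + t *\<^sub>R b) \<le> (1 - t) * \<psi> a + t * \<psi> b"
      unfolding \<psi>_def using convex_onD[OF strongly_convex[folded F_def], of t] t by simp
  qed simp
  moreover have "(\<psi> has_real_derivative inner (gradf v - \<sigma> *\<^sub>R v) (u - v)) (at 0)"
  proof -
    have DF: "(F has_derivative (\<lambda>h. inner (gradf w - \<sigma> *\<^sub>R w) h)) (at w)" for w
      unfolding F_def power2_norm_eq_inner
      by (rule has_derivative_eq_rhs, (rule derivative_eq_intros f_grad refl)+)
        (auto simp: fun_eq_iff inner_simps inner_commute algebra_simps)
    have "((\<lambda>t. v + t *\<^sub>R (u - v)) has_derivative (\<lambda>t. t *\<^sub>R (u - v))) (at 0)"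
      by (auto intro!: derivative_eq_intros)
    from has_derivative_compose[OF this DF[of "v + 0 *\<^sub>R (u - v)"]] show ?thesis
      unfolding \<psi>_def has_field_derivative_def
      by (rule has_derivative_eq_rhs) (auto simp: fun_eq_iff)
  qed
  ultimately have "\<psi> 1 - \<psi> 0 \<ge> inner (gradf v - \<sigma> *\<^sub>R v) (u - v) * (1 - 0)"
    by (intro convex_on_imp_above_tangent) (auto simp: has_field_derivative_at_within)
  then show ?thesis
    unfolding \<psi>_def F_def power2_norm_eq_inner by (simp add: inner_simps inner_commute algebra_simps)
qed

lemma strong_convexity_modulus_le_Lipschitz:
  fixes f :: "'a::euclidean_space \<Rightarrow> real" and gradf :: "'a \<Rightarrow> 'a"
  assumes f_grad: "\<And>u. (f has_derivative (\<lambda>h. inner (gradf u) h)) (at u)"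
    and strongly_convex: "convex_on UNIV (\<lambda>u. f u - \<sigma> / 2 * (norm u)\<^sup>2)"
    and gradf_Lipschitz: "\<And>u v. norm (gradf u - gradf v) \<le> L * norm (u - v)"
  shows "\<sigma> \<le> L"
proof -
  obtain b :: 'a where "b \<in> Basis" using nonempty_Basis by blast
  then have b: "norm b = 1" by simp
  note grad_ineq = strongly_convex_gradient_inequality[OF f_grad strongly_convex]
  have "f b \<ge> f 0 + inner (gradf 0) b + \<sigma> / 2" "f 0 \<ge> f b - inner (gradf b) b + \<sigma> / 2"
    using grad_ineq[of b 0] grad_ineq[of 0 b] b by simp_all
  moreover have "inner (gradf b - gradf 0) b \<le> L"
    using norm_cauchy_schwarz[of "gradf b - gradf 0" b] gradf_Lipschitz[of b 0] b by simp
  ultimately show ?thesis by (simp add: inner_simps)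
qed

lemma gradient_at_prox_minimizer:
  fixes f :: "'a::real_inner \<Rightarrow> real" and gradf :: "'a \<Rightarrow> 'a"
  assumes f_grad: "(f has_derivative (\<lambda>h. inner (gradf u) h)) (at u)" and \<gamma>: "0 < \<gamma>"
    and minimizer: "\<And>v. f u + (norm (u - c))\<^sup>2 / (2 * \<gamma>) \<le> f v + (norm (v - c))\<^sup>2 / (2 * \<gamma>)"
  shows "c = u + \<gamma> *\<^sub>R gradf u"
proof -
  define p where "p = gradf u + (1 / \<gamma>) *\<^sub>R (u - c)"
  have deriv: "((\<lambda>v. f v + (norm (v - c))\<^sup>2 / (2 * \<gamma>)) has_derivative (\<lambda>h. inner p h)) (at u)"
    unfolding p_def power2_norm_eq_inner
    by (rule has_derivative_eq_rhs, (auto intro!: derivative_eq_intros f_grad)[1])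
      (use \<gamma> in \<open>auto simp: fun_eq_iff inner_simps inner_commute field_simps\<close>)
  have "(\<lambda>h. inner p h) = (\<lambda>h. 0)"
    by (rule differential_zero_maxmin[of u UNIV, OF _ _ deriv]) (use minimizer in auto)
  then have "\<gamma> *\<^sub>R p = 0" by (metis inner_eq_zero_iff scaleR_zero_right)
  then have "\<gamma> *\<^sub>R gradf u + (u - c) = 0" using \<gamma> by (simp add: p_def scaleR_add_right)
  then show ?thesis by (simp add: algebra_simps add_eq_0_iff2)
qed

section \<open>Sequences with the Kurdyka-Lojasiewicz property\<close>

lemma frechet_subdiff_subset_limiting_subdiff: "frechet_subdiff h w \<subseteq> limiting_subdiff h w"
  unfolding limiting_subdiff_def by (force intro!: exI[of _ "\<lambda>_. w"] exI[of _ "\<lambda>_. v" for v])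

lemma concave_on_tangent_bound:
  fixes \<phi> :: "real \<Rightarrow> real" and \<eta> :: ereal
  assumes concave: "concave_on {s. 0 \<le> s \<and> ereal s < \<eta>} \<phi>"
    and s: "0 < s" "ereal s < \<eta>" and deriv: "(\<phi> has_real_derivative \<phi>') (at s)"
    and s': "0 \<le> s'" "ereal s' < \<eta>"
  shows "\<phi> s - \<phi> s' \<ge> \<phi>' * (s - s')"
proof -
  define D where "D = {s. 0 \<le> s \<and> ereal s < \<eta>}"
  have "convex D" using concave concave_on_imp_convex unfolding D_def by blast
  obtain e where e: "s < e" "ereal e < \<eta>" using ereal_dense2[OF s(2)] by auto
  have "ball s (min s (e - s)) \<subseteq> D"
  proof
    fix u assume "u \<in> ball s (min s (e - s))"
    then have "0 \<le> u" "u \<le> e" by (auto simp: dist_real_def)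
    then show "u \<in> D" unfolding D_def using e(2) by (auto intro: le_less_trans[of "ereal u" "ereal e"])
  qed
  then have "s \<in> interior D" using s e by (auto simp: mem_interior intro!: exI[of _ "min s (e - s)"])
  from convex_on_imp_above_tangent[of D "\<lambda>x. - \<phi> x", OF _ convex_connected[OF \<open>convex D\<close>] this, of s' "- \<phi>'"]
  show ?thesis
    using concave s' DERIV_minus[OF deriv]
    unfolding D_def concave_on_def by (simp add: has_field_derivative_at_within algebra_simps)
qed

lemma convergent_if_summable_norm_diff:
  fixes w :: "nat \<Rightarrow> 'b::banach"
  assumes "summable (\<lambda>k. norm (w (Suc k) - w k))"
  shows "convergent w"
proof -
  have "convergent (\<lambda>n. \<Sum>k<n. w (Suc k) - w k)"
    using summable_norm_cancel[OF assms] by (simp add: summable_iff_convergent)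
  then show ?thesis by (simp add: sum_lessThan_telescope convergent_diff_const_right_iff)
qed

lemma summable_if_trapped_in_ball:
  fixes w :: "nat \<Rightarrow> 'b::real_normed_vector" and d \<Phi> :: "nat \<Rightarrow> real"
  assumes d_nonneg: "\<And>k. 0 \<le> d k" and M: "0 \<le> M"
    and step: "\<And>k. norm (w (Suc k) - w k) \<le> M * (d k + d (Suc k))"
    and drop: "\<And>k. N \<le> k \<Longrightarrow> w k \<in> ball c \<rho> \<Longrightarrow> d k \<le> \<Phi> k - \<Phi> (Suc k)"
    and \<Phi>_nonneg: "\<And>k. N \<le> k \<Longrightarrow> 0 \<le> \<Phi> k"
    and d_small: "\<And>k. N \<le> k \<Longrightarrow> d k \<le> \<delta>"
    and start: "dist c (w N) + M * (2 * \<Phi> N + \<delta>) < \<rho>"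
  shows "summable d"
proof -
  have path: "norm (w (N + m) - w N) \<le> M * (2 * (\<Sum>k\<in>{N..<N + m}. d k) + d (N + m))" for m
  proof (induction m)
    case 0
    then show ?case using M d_nonneg[of N] by simp
  next
    case (Suc m)
    have "norm (w (N + Suc m) - w N) \<le> norm (w (Suc (N + m)) - w (N + m)) + norm (w (N + m) - w N)"
      using norm_triangle_ineq[of "w (Suc (N + m)) - w (N + m)" "w (N + m) - w N"] by simp
    also have "\<dots> \<le> M * (d (N + m) + d (Suc (N + m))) + M * (2 * (\<Sum>k\<in>{N..<N + m}. d k) + d (N + m))"
      using step Suc by (rule add_mono)
    also have "\<dots> = M * (2 * (\<Sum>k\<in>{N..<N + Suc m}. d k) + d (N + Suc m))"
      by (simp add: algebra_simps)
    finally show ?case .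
  qed
  have sum_drop: "(\<Sum>k\<in>{N..<N + m}. d k) \<le> \<Phi> N - \<Phi> (N + m)"
    if "\<forall>k\<in>{N..<N + m}. w k \<in> ball c \<rho>" for m
    using that
  proof (induction m)
    case (Suc m)
    then have "d (N + m) \<le> \<Phi> (N + m) - \<Phi> (Suc (N + m))" by (intro drop) auto
    with Suc show ?case by simp
  qed simp
  have trapped: "w (N + m) \<in> ball c \<rho>" for m
  proof (induction m rule: less_induct)
    case (less m)
    have "\<forall>k\<in>{N..<N + m}. w k \<in> ball c \<rho>"
      using less by (metis atLeastLessThan_iff le_Suc_ex nat_add_left_cancel_less)
    then have "(\<Sum>k\<in>{N..<N + m}. d k) \<le> \<Phi> N"
      using sum_drop \<Phi>_nonneg[of "N + m"] by fastforce
    then have "M * (2 * (\<Sum>k\<in>{N..<N + m}. d k) + d (N + m)) \<le> M * (2 * \<Phi> N + \<delta>)"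
      using d_small[of "N + m"] M by (intro mult_left_mono) auto
    with path[of m] show ?case
      using start dist_triangle[of c "w (N + m)" "w N"] by (simp add: dist_norm norm_minus_commute)
  qed
  have "(\<Sum>i<m. d (i + N)) \<le> \<Phi> N" for m
    using sum_drop[of m] trapped \<Phi>_nonneg[of "N + m"] sum.shift_bounds_nat_ivl[of d 0 N m]
    by (fastforce simp: le_iff_add atLeast0LessThan add.commute)
  then have "summable (\<lambda>m. d (m + N))"
    by (intro summableI_nonneg_bounded[where x = "\<Phi> N"] d_nonneg)
  then show ?thesis by (rule summable_iff_shift[THEN iffD1])
qed

text \<open>
  Here \<open>d k\<close> measures the progress of
  step \<open>k\<close>; it need not be the step length, which is only required to be controlled by two
  consecutive values of \<open>d\<close>.
\<close>

locale KL_descent =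
  fixes h :: "'b::{real_inner,banach} \<Rightarrow> ereal"
    and w v :: "nat \<Rightarrow> 'b" and H d :: "nat \<Rightarrow> real" and a b M :: real
  assumes a_pos: "0 < a" and b_pos: "0 < b" and M_nonneg: "0 \<le> M"
    and h_w: "\<And>k. h (w k) = ereal (H k)"
    and sufficient_descent: "\<And>k. H (Suc k) \<le> H k - a * (d k)\<^sup>2"
    and d_nonneg: "\<And>k. 0 \<le> d k"
    and subgradient: "\<And>k. v k \<in> frechet_subdiff h (w k)"
    and subgradient_bound: "\<And>k. norm (v k) \<le> b * d k"
    and step_bound: "\<And>k. norm (w (Suc k) - w k) \<le> M * (d k + d (Suc k))"
begin

lemma decseq_H: "decseq H"
proof (rule decseq_SucI)
  fix k
  have "0 \<le> a * (d k)\<^sup>2" using a_pos by simp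
  with sufficient_descent[of k] show "H (Suc k) \<le> H k" by linarith
qed

lemma tendsto_H_if_subsequence:
  assumes r: "strict_mono r" and H_r: "(\<lambda>j. H (r j)) \<longlonglongrightarrow> hs"
  shows "H \<longlonglongrightarrow> hs"
proof -
  have "hs \<le> H k" for k
  proof (rule LIMSEQ_le_const2[OF H_r])
    show "\<exists>N. \<forall>n\<ge>N. H (r n) \<le> H k"
      using seq_suble[OF r] decseqD[OF decseq_H] by (meson order_trans)
  qed
  then obtain L where "H \<longlonglongrightarrow> L" using decseq_convergent[OF decseq_H, of hs] by blast
  moreover from LIMSEQ_subseq_LIMSEQ[OF this r] have "(\<lambda>j. H (r j)) \<longlonglongrightarrow> L"
    by (simp add: comp_def)
  ultimately show ?thesis using H_r LIMSEQ_unique by blast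
qed

context
  fixes hs :: real
  assumes H_lim: "H \<longlonglongrightarrow> hs"
begin

lemma H_ge_limit: "hs \<le> H k"
  by (rule decseq_ge[OF decseq_H H_lim])

lemma d_le_sqrt_gap: "d k \<le> sqrt ((H k - hs) / a)"
proof -
  have "a * (d k)\<^sup>2 \<le> H k - hs"
    using sufficient_descent[of k] H_ge_limit[of "Suc k"] by simp
  then show ?thesis
    using a_pos by (intro real_le_rsqrt) (simp add: field_simps)
qed

lemma d_tendsto_zero: "d \<longlonglongrightarrow> 0"
proof (rule Lim_null_comparison)
  show "eventually (\<lambda>k. norm (d k) \<le> sqrt ((H k - hs) / a)) sequentially"
    using d_le_sqrt_gap d_nonneg by simp
  show "(\<lambda>k. sqrt ((H k - hs) / a)) \<longlonglongrightarrow> 0"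
    using tendsto_real_sqrt[OF tendsto_divide_zero[OF LIM_zero[OF H_lim]]] by simp
qed

lemma zero_in_limiting_subdiff:
  assumes r: "strict_mono r" and w_r: "(\<lambda>j. w (r j)) \<longlonglongrightarrow> ws" and h_ws: "h ws = ereal hs"
  shows "0 \<in> limiting_subdiff h ws"
  unfolding limiting_subdiff_def
proof (intro CollectI exI conjI allI)
  show "(\<lambda>j. w (r j)) \<longlonglongrightarrow> ws" by (rule w_r)
  show "(\<lambda>j. h (w (r j))) \<longlonglongrightarrow> h ws"
    unfolding h_w h_ws using LIMSEQ_subseq_LIMSEQ[OF H_lim r] by (simp add: comp_def)
  show "v (r j) \<in> frechet_subdiff h (w (r j))" for j by (rule subgradient)
  have bound_lim: "(\<lambda>j. b * d (r j)) \<longlonglongrightarrow> 0"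
    using tendsto_mult_right_zero[OF LIMSEQ_subseq_LIMSEQ[OF d_tendsto_zero r]] by (simp add: comp_def)
  show "(\<lambda>j. v (r j)) \<longlonglongrightarrow> 0"
    by (intro Lim_null_comparison[OF _ bound_lim] always_eventually allI subgradient_bound)
qed

lemma d_le_KL_potential_drop:
  assumes concave: "concave_on {s. 0 \<le> s \<and> ereal s < \<eta>} \<phi>"
    and gap: "0 < H k - hs" "ereal (H k - hs) < \<eta>"
    and deriv: "(\<phi> has_real_derivative q) (at (H k - hs))"
    and KL_ineq: "1 \<le> q * norm (v k)"
  shows "d k \<le> b / a * (\<phi> (H k - hs) - \<phi> (H (Suc k) - hs))"
proof -
  define P where "P = \<phi> (H k - hs) - \<phi> (H (Suc k) - hs)"
  have q: "0 < q" using KL_ineq by (smt (verit) mult_nonpos_nonneg norm_ge_zero)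
  have "1 \<le> q * (b * d k)"
    using KL_ineq mult_left_mono[OF subgradient_bound[of k] less_imp_le[OF q]] by linarith
  then have d_pos: "0 < d k" using q b_pos by (smt (verit) mult_nonneg_nonpos d_nonneg)
  have "ereal (H (Suc k) - hs) \<le> ereal (H k - hs)" using decseqD[OF decseq_H, of k "Suc k"] by simp
  then have "ereal (H (Suc k) - hs) < \<eta>" using gap(2) by (rule le_less_trans)
  then have "q * (H k - H (Suc k)) \<le> P"
    using concave_on_tangent_bound[OF concave gap deriv, of "H (Suc k) - hs"] H_ge_limit[of "Suc k"]
    unfolding P_def by simp
  moreover have "q * (a * (d k)\<^sup>2) \<le> q * (H k - H (Suc k))"
    using sufficient_descent[of k] q by (intro mult_left_mono) auto
  ultimately have qP: "q * (a * (d k)\<^sup>2) \<le> P" by linarith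
  have "a * (d k)\<^sup>2 * 1 \<le> a * (d k)\<^sup>2 * (q * (b * d k))"
    using \<open>1 \<le> q * (b * d k)\<close> a_pos by (intro mult_left_mono) auto
  also have "\<dots> = q * (a * (d k)\<^sup>2) * (b * d k)" by (simp add: algebra_simps)
  also have "\<dots> \<le> P * (b * d k)"
    using qP b_pos d_pos by (intro mult_right_mono) auto
  finally have "a * (d k)\<^sup>2 \<le> P * (b * d k)" by simp
  then have "a * d k \<le> b * P"
    using d_pos by (simp add: power2_eq_square algebra_simps)
  then show ?thesis using a_pos unfolding P_def by (simp add: field_simps)
qed

lemma eventually_potential_small:
  assumes \<eta>: "0 < \<eta>" and \<phi>_cont: "continuous_on {s. 0 \<le> s \<and> ereal s < \<eta>} \<phi>" and \<phi>_0: "\<phi> 0 = 0"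
    and gap: "\<And>k. hs < H k" and \<epsilon>: "0 < \<epsilon>"
  shows "eventually (\<lambda>k. ereal (H k - hs) < \<eta> \<and>
      M * (2 * (b / a * \<phi> (H k - hs)) + sqrt ((H k - hs) / a)) < \<epsilon>) sequentially"
proof -
  have gap_lim: "(\<lambda>k. H k - hs) \<longlonglongrightarrow> 0" using LIM_zero[OF H_lim] .
  have below_\<eta>: "eventually (\<lambda>k. ereal (H k - hs) < \<eta>) sequentially"
    using order_tendstoD(2)[OF tendsto_ereal[OF gap_lim]] \<eta> by (simp add: zero_ereal_def)
  then have "eventually (\<lambda>k. H k - hs \<in> {s. 0 \<le> s \<and> ereal s < \<eta>}) sequentially"
    by eventually_elim (use gap in \<open>auto intro: less_imp_le\<close>)
  then have "(\<lambda>k. \<phi> (H k - hs)) \<longlonglongrightarrow> \<phi> 0"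
    using continuous_on_tendsto_compose[OF \<phi>_cont gap_lim] \<eta> by (simp add: zero_ereal_def)
  then have "(\<lambda>k. M * (2 * (b / a * \<phi> (H k - hs)) + sqrt ((H k - hs) / a)))
      \<longlonglongrightarrow> M * (2 * (b / a * 0) + sqrt (0 / a))"
    unfolding \<phi>_0 using a_pos by (intro tendsto_intros gap_lim) auto
  then have "eventually (\<lambda>k. M * (2 * (b / a * \<phi> (H k - hs)) + sqrt ((H k - hs) / a)) < \<epsilon>) sequentially"
    using \<epsilon> by (intro order_tendstoD(2)) auto
  with below_\<eta> show ?thesis by (rule eventually_conj)
qed

lemma summable_d_if_KL_at:
  assumes KL: "KL_at h ws" and h_ws: "h ws = ereal hs"
    and r: "strict_mono r" and w_r: "(\<lambda>j. w (r j)) \<longlonglongrightarrow> ws"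
    and gap: "\<And>k. hs < H k"
  shows "summable d"
proof -
  obtain \<eta> U \<phi> \<phi>' where
    \<eta>: "0 < \<eta>" and U: "open U" "ws \<in> U"
    and \<phi>_cont: "continuous_on {s. 0 \<le> s \<and> ereal s < \<eta>} \<phi>"
    and \<phi>_concave: "concave_on {s. 0 \<le> s \<and> ereal s < \<eta>} \<phi>"
    and \<phi>_0: "\<phi> 0 = 0" and \<phi>_nonneg: "\<And>s. 0 \<le> s \<Longrightarrow> ereal s < \<eta> \<Longrightarrow> 0 \<le> \<phi> s"
    and \<phi>_deriv: "\<And>s. 0 < s \<Longrightarrow> ereal s < \<eta> \<Longrightarrow> (\<phi> has_real_derivative \<phi>' s) (at s)"
    and KL_ineq: "\<And>u. u \<in> U \<Longrightarrow> h ws < h u \<Longrightarrow> h u < h ws + \<eta> \<Longrightarrow>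
        \<forall>v\<in>limiting_subdiff h u. \<phi>' (real_of_ereal (h u - h ws)) * norm v \<ge> 1"
    using KL unfolding KL_at_def by blast
  obtain \<rho> where \<rho>: "0 < \<rho>" "ball ws \<rho> \<subseteq> U" using U open_contains_ball by blast
  define \<Phi> where "\<Phi> k = b / a * \<phi> (H k - hs)" for k
  obtain K where K: "\<And>k. K \<le> k \<Longrightarrow>
      ereal (H k - hs) < \<eta> \<and> M * (2 * \<Phi> k + sqrt ((H k - hs) / a)) < \<rho> / 2"
    using eventually_potential_small[OF \<eta> \<phi>_cont \<phi>_0 gap, of "\<rho> / 2"] \<rho>(1)
    unfolding \<Phi>_def eventually_sequentially by auto
  obtain j0 where j0: "\<And>j. j0 \<le> j \<Longrightarrow> dist (w (r j)) ws < \<rho> / 2"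
    using tendstoD[OF w_r, of "\<rho> / 2"] \<rho> by (auto simp: eventually_sequentially)
  define N where "N = r (max K j0)"
  have "K \<le> N" using seq_suble[OF r, of "max K j0"] unfolding N_def by simp
  show ?thesis
  proof (rule summable_if_trapped_in_ball[where w = w and d = d and M = M and N = N and c = ws
        and \<rho> = \<rho> and \<Phi> = \<Phi> and \<delta> = "sqrt ((H N - hs) / a)", OF d_nonneg M_nonneg step_bound])
    fix k assume k: "N \<le> k"
    have "ereal (H k - hs) \<le> ereal (H N - hs)" using decseqD[OF decseq_H k] by simp
    also have "\<dots> < \<eta>" using K[OF \<open>K \<le> N\<close>] by blast
    finally have k_\<eta>: "ereal (H k - hs) < \<eta>" .
    show "0 \<le> \<Phi> k" unfolding \<Phi>_def using \<phi>_nonneg[OF _ k_\<eta>] gap[of k] a_pos b_pos by simp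
    show "d k \<le> sqrt ((H N - hs) / a)"
      by (intro order_trans[OF d_le_sqrt_gap] real_sqrt_le_mono divide_right_mono)
        (use decseqD[OF decseq_H k] a_pos in auto)
    assume "w k \<in> ball ws \<rho>"
    then have "w k \<in> U" using \<rho>(2) by blast
    moreover have "h (w k) < h ws + \<eta>" using k_\<eta> unfolding h_w h_ws by (cases \<eta>) auto
    moreover have "v k \<in> limiting_subdiff h (w k)"
      using subgradient frechet_subdiff_subset_limiting_subdiff by blast
    ultimately have "1 \<le> \<phi>' (H k - hs) * norm (v k)"
      using KL_ineq[of "w k"] gap[of k] unfolding h_w h_ws by simp
    from d_le_KL_potential_drop[OF \<phi>_concave _ k_\<eta> \<phi>_deriv[OF _ k_\<eta>] this] gap[of k]
    show "d k \<le> \<Phi> k - \<Phi> (Suc k)" unfolding \<Phi>_def by (simp add: right_diff_distrib)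
  next
    show "dist ws (w N) + M * (2 * \<Phi> N + sqrt ((H N - hs) / a)) < \<rho>"
      using j0[of "max K j0"] K[OF \<open>K \<le> N\<close>] unfolding N_def by (simp add: dist_commute)
  qed
qed

end

theorem convergent_if_KL_cluster_point:
  assumes KL: "KL_function h" and r: "strict_mono r"
    and w_r: "(\<lambda>j. w (r j)) \<longlonglongrightarrow> ws" and H_r: "(\<lambda>j. H (r j)) \<longlonglongrightarrow> hs" and h_ws: "h ws = ereal hs"
  shows "convergent w"
proof -
  have H_lim: "H \<longlonglongrightarrow> hs" by (rule tendsto_H_if_subsequence[OF r H_r])
  have "summable d"
  proof (cases "\<exists>K. H K = hs")
    case True
    then obtain K where "H K = hs" by blast
    then have "d k = 0" if "K \<le> k" for k
      using d_le_sqrt_gap[OF H_lim, of k] decseqD[OF decseq_H that] H_ge_limit[OF H_lim, of k] d_nonneg[of k]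
      by simp
    then show ?thesis by (auto intro: summable_comparison_test'[of "\<lambda>_. 0" K])
  next
    case False
    then have "hs < H k" for k using H_ge_limit[OF H_lim, of k] by (auto simp: le_less)
    moreover have "KL_at h ws"
      using KL zero_in_limiting_subdiff[OF H_lim r w_r h_ws] unfolding KL_function_def by blast
    ultimately show ?thesis using summable_d_if_KL_at[OF H_lim _ h_ws r w_r] by blast
  qed
  then have "summable (\<lambda>k. M * (d k + d (Suc k)))"
    by (intro summable_mult summable_add) (auto simp: summable_Suc_iff)
  then show ?thesis
    by (rule convergent_if_summable_norm_diff[OF summable_comparison_test'[of _ 0]]) (use step_bound in auto)
qed

end

section \<open>Peaceman-Rachford splitting\<close>

definition coupling :: "real \<Rightarrow> 'a::real_inner \<times> 'a \<times> 'a \<Rightarrow> real" where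
  "coupling \<gamma> w = (case w of (y, z, x) \<Rightarrow> - 3 / (2 * \<gamma>) * (norm (y - z))\<^sup>2 + (1 / \<gamma>) * inner (x - y) (z - y))"

lemma merit_eq_coupling: "merit f g \<gamma> (y, z, x) = ereal (f y + coupling \<gamma> (y, z, x)) + g z"
  by (simp add: merit_def coupling_def algebra_simps)

lemma isCont_coupling: "isCont (coupling \<gamma>) w"
  unfolding coupling_def case_prod_beta by (intro continuous_intros)

lemma coupling_lower_bound:
  assumes \<gamma>: "0 < \<gamma>"
  shows "coupling \<gamma> w \<ge> - (10 / \<gamma> * (norm w)\<^sup>2)"
proof -
  obtain dy dz dx where w: "w = (dy, dz, dx)" by (cases w)
  define N where "N = norm w"
  have "norm dy \<le> N" "norm dz \<le> N" "norm dx \<le> N"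
    unfolding N_def w by (meson norm_fst_le norm_snd_le order_trans)+
  then have "norm (dy - dz) \<le> 2 * N" "norm (dx - dy) \<le> 2 * N" "norm (dz - dy) \<le> 2 * N"
    using norm_triangle_ineq4[of dy dz] norm_triangle_ineq4[of dx dy] norm_triangle_ineq4[of dz dy]
    by linarith+
  then have "(norm (dy - dz))\<^sup>2 \<le> (2 * N)\<^sup>2" "\<bar>inner (dx - dy) (dz - dy)\<bar> \<le> (2 * N) * (2 * N)"
    using Cauchy_Schwarz_ineq2[of "dx - dy" "dz - dy"]
    by (meson power_mono norm_ge_zero, meson mult_mono norm_ge_zero order_trans)
  then have "(norm (dy - dz))\<^sup>2 \<le> 4 * N\<^sup>2" "inner (dx - dy) (dz - dy) \<ge> - (4 * N\<^sup>2)"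
    by (simp_all add: power2_eq_square abs_le_iff)
  then have "3 / (2 * \<gamma>) * (norm (dy - dz))\<^sup>2 \<le> 3 / (2 * \<gamma>) * (4 * N\<^sup>2)"
    "(1 / \<gamma>) * inner (dx - dy) (dz - dy) \<ge> (1 / \<gamma>) * (- (4 * N\<^sup>2))"
    using \<gamma> by (intro mult_left_mono; simp)+
  then show ?thesis unfolding N_def[symmetric] unfolding w coupling_def using \<gamma> by (simp add: field_simps)
qed

lemma lsc_fun_eventually_greater:
  fixes g :: "'a::metric_space \<Rightarrow> ereal"
  assumes lsc: "lsc_fun g" and s: "s \<longlonglongrightarrow> z" and c: "c < g z"
  shows "eventually (\<lambda>j. c < g (s j)) sequentially"
proof -
  have "c < Liminf (at z) g" using lsc c unfolding lsc_fun_def by (metis less_le_trans)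
  then have "eventually (\<lambda>x. c < g x) (nhds z)"
    using c by (auto simp: eventually_nhds_conv_at dest: less_LiminfD)
  then show ?thesis using s by (rule eventually_compose_filterlim)
qed

lemma prox_values_tendsto:
  fixes g :: "'a::real_normed_vector \<Rightarrow> ereal" and G :: "nat \<Rightarrow> real"
  assumes lsc: "lsc_fun g" and proper: "proper_fun g"
    and u: "u \<longlonglongrightarrow> u0" and m: "m \<longlonglongrightarrow> m0" and g_u: "\<And>j. g (u j) = ereal (G j)"
    and prox: "\<And>j v. ereal (G j + (norm (m j - u j))\<^sup>2 / c) \<le> g v + ereal ((norm (m j - v))\<^sup>2 / c)"
  shows "\<exists>G0. g u0 = ereal G0 \<and> G \<longlonglongrightarrow> G0"
proof -
  define A where "A j = (norm (m j - u j))\<^sup>2 / c" for j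
  define B where "B v j = (norm (m j - v))\<^sup>2 / c" for v j
  have A: "A \<longlonglongrightarrow> (norm (m0 - u0))\<^sup>2 / c" unfolding A_def divide_inverse by (intro tendsto_intros m u)
  have B: "B v \<longlonglongrightarrow> (norm (m0 - v))\<^sup>2 / c" for v unfolding B_def divide_inverse by (intro tendsto_intros m)
  have G_le: "G j \<le> r + B v j - A j" if "g v = ereal r" for v r j
    using prox[of j v] that unfolding A_def B_def by simp
  have "g u0 \<noteq> \<infinity>"
  proof
    assume "g u0 = \<infinity>"
    obtain v0 r0 where r0: "g v0 = ereal r0"
      using proper unfolding proper_fun_def by (metis ereal_cases)
    define R where "R = r0 + (norm (m0 - v0))\<^sup>2 / c - (norm (m0 - u0))\<^sup>2 / c"
    have "(\<lambda>j. r0 + B v0 j - A j) \<longlonglongrightarrow> R" unfolding R_def by (intro tendsto_intros A B)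
    then have "eventually (\<lambda>j. r0 + B v0 j - A j < R + 1) sequentially"
      by (rule order_tendstoD(2)) simp
    moreover have "eventually (\<lambda>j. ereal (R + 1) < g (u j)) sequentially"
      using \<open>g u0 = \<infinity>\<close> by (intro lsc_fun_eventually_greater[OF lsc u]) simp
    ultimately have "eventually (\<lambda>j. False) sequentially"
    proof eventually_elim
      case (elim j)
      then show False using G_le[OF r0, of j] by (simp add: g_u)
    qed
    then show False by simp
  qed
  then obtain G0 where G0: "g u0 = ereal G0"
    using proper unfolding proper_fun_def by (metis ereal_cases)
  have "G \<longlonglongrightarrow> G0"
  proof (rule order_tendstoI)
    fix c' assume "c' < G0"
    then show "eventually (\<lambda>j. c' < G j) sequentially"
      using lsc_fun_eventually_greater[OF lsc u, of "ereal c'"] G0 by (simp add: g_u)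
  next
    fix c' assume "G0 < c'"
    have "(\<lambda>j. G0 + B u0 j - A j) \<longlonglongrightarrow> G0 + (norm (m0 - u0))\<^sup>2 / c - (norm (m0 - u0))\<^sup>2 / c"
      by (intro tendsto_intros A B)
    then have "eventually (\<lambda>j. G0 + B u0 j - A j < c') sequentially"
      using \<open>G0 < c'\<close> by (intro order_tendstoD(2)) auto
    then show "eventually (\<lambda>j. G j < c') sequentially"
      by (rule eventually_mono) (erule order.strict_trans1[OF G_le[OF G0]])
  qed
  with G0 show ?thesis by blast
qed

locale PR_iteration =
  fixes f :: "'a::euclidean_space \<Rightarrow> real"
    and gradf :: "'a \<Rightarrow> 'a"
    and g :: "'a \<Rightarrow> ereal"
    and \<sigma> L \<gamma> :: real
    and y z x :: "nat \<Rightarrow> 'a"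
  assumes sigma_pos: "\<sigma> > 0" and L_pos: "L > 0"
    and f_grad: "\<And>u. (f has_derivative (\<lambda>h. inner (gradf u) h)) (at u)"
    and f_strongly_convex: "convex_on UNIV (\<lambda>u. f u - \<sigma> / 2 * (norm u)\<^sup>2)"
    and gradf_Lipschitz: "\<And>u v. norm (gradf u - gradf v) \<le> L * norm (u - v)"
    and g_proper: "proper_fun g" and g_lsc: "lsc_fun g"
    and gamma_pos: "0 < \<gamma>" and gamma_bound: "\<gamma> < (3 * \<sigma> - 2 * L) / L\<^sup>2"
    and y_step: "\<And>t u. f (y (Suc t)) + (norm (y (Suc t) - x t))\<^sup>2 / (2 * \<gamma>)
                        \<le> f u + (norm (u - x t))\<^sup>2 / (2 * \<gamma>)"
    and z_step: "\<And>t u. g (z (Suc t)) + ereal ((norm (2 *\<^sub>R y (Suc t) - x t - z (Suc t)))\<^sup>2 / (2 * \<gamma>))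
                        \<le> g u + ereal ((norm (2 *\<^sub>R y (Suc t) - x t - u))\<^sup>2 / (2 * \<gamma>))"
    and x_step: "\<And>t. x (Suc t) = x t + 2 *\<^sub>R (z (Suc t) - y (Suc t))"
begin

lemma x_eq: "x t = y (Suc t) + \<gamma> *\<^sub>R gradf (y (Suc t))"
  using gradient_at_prox_minimizer[where gradf = gradf, OF f_grad gamma_pos y_step[of t]] .

lemma z_eq: "z (Suc t) = y (Suc t) + (1 / 2) *\<^sub>R (x (Suc t) - x t)"
  using x_step[of t] by simp

lemma grad_ineq: "f u \<ge> f v + inner (gradf v) (u - v) + \<sigma> / 2 * (norm (u - v))\<^sup>2"
  by (rule strongly_convex_gradient_inequality[OF f_grad f_strongly_convex])

lemma g_z_finite: "\<bar>g (z (Suc t))\<bar> \<noteq> \<infinity>"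
proof -
  obtain u where "g u \<noteq> \<infinity>" using g_proper unfolding proper_fun_def by blast
  then have "g (z (Suc t)) + ereal ((norm (2 *\<^sub>R y (Suc t) - x t - z (Suc t)))\<^sup>2 / (2 * \<gamma>)) \<noteq> \<infinity>"
    using z_step[of t u] by auto
  then show ?thesis using g_proper unfolding proper_fun_def by auto
qed

definition gz :: "nat \<Rightarrow> real" where "gz k = real_of_ereal (g (z k))"

lemma g_z_eq: "g (z (Suc t)) = ereal (gz (Suc t))"
  using g_z_finite[of t] unfolding gz_def by (cases "g (z (Suc t))") auto

lemma z_step_lower_bound:
  "ereal (gz (Suc t) + (norm (2 *\<^sub>R y (Suc t) - x t - z (Suc t)))\<^sup>2 / (2 * \<gamma>)
     - (norm (2 *\<^sub>R y (Suc t) - x t - u))\<^sup>2 / (2 * \<gamma>)) \<le> g u"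
  using z_step[of t u] unfolding g_z_eq by (cases "g u") auto

definition iterate :: "nat \<Rightarrow> 'a \<times> 'a \<times> 'a" where "iterate k = (y k, z k, x k)"

definition merit_value :: "nat \<Rightarrow> real" where
  "merit_value k = f (y k) + coupling \<gamma> (iterate k) + gz k"

lemma merit_iterate: "merit f g \<gamma> (iterate (Suc t)) = ereal (merit_value (Suc t))"
  unfolding iterate_def merit_eq_coupling merit_value_def g_z_eq by simp

definition y_increment :: "nat \<Rightarrow> real" where "y_increment k = norm (y (Suc k) - y k)"

definition descent_rate :: real where "descent_rate = (\<sigma> - \<gamma> * L\<^sup>2) / 2"

lemma descent_rate_pos: "0 < descent_rate"
proof -
  have "\<gamma> * L\<^sup>2 < 3 * \<sigma> - 2 * L" using gamma_bound L_pos by (simp add: field_simps)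
  moreover have "\<sigma> \<le> L"
    by (rule strong_convexity_modulus_le_Lipschitz[OF f_grad f_strongly_convex gradf_Lipschitz])
  ultimately show ?thesis unfolding descent_rate_def by simp
qed

lemma merit_value_descent:
  "merit_value (Suc (Suc t)) \<le> merit_value (Suc t) - descent_rate * (y_increment (Suc t))\<^sup>2"
proof -
  define a where "a = y (Suc t)"
  define p where "p = y (Suc (Suc t))"
  define z' where "z' = z (Suc (Suc t))"
  have x_a: "x t = a + \<gamma> *\<^sub>R gradf a" and x_p: "x (Suc t) = p + \<gamma> *\<^sub>R gradf p"
    using x_eq[of t] x_eq[of "Suc t"] unfolding a_def p_def by simp_all
  have z_a: "z (Suc t) = a + (1 / 2) *\<^sub>R (x (Suc t) - (a + \<gamma> *\<^sub>R gradf a))"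
    using z_eq[of t] unfolding x_a a_def .
  have x_z': "x (Suc (Suc t)) = x (Suc t) + 2 *\<^sub>R (z' - p)"
    using x_step[of "Suc t"] unfolding z'_def p_def .
  have prox: "gz (Suc (Suc t)) + (norm (2 *\<^sub>R p - x (Suc t) - z'))\<^sup>2 / (2 * \<gamma>)
      \<le> gz (Suc t) + (norm (2 *\<^sub>R p - x (Suc t) - z (Suc t)))\<^sup>2 / (2 * \<gamma>)"
    using z_step_lower_bound[of "Suc t" "z (Suc t)"] g_z_eq[of t] unfolding p_def z'_def by simp
  have identity: "coupling \<gamma> (p, z', x (Suc (Suc t))) - coupling \<gamma> (a, z (Suc t), x (Suc t))
      - (norm (2 *\<^sub>R p - x (Suc t) - z'))\<^sup>2 / (2 * \<gamma>) + (norm (2 *\<^sub>R p - x (Suc t) - z (Suc t)))\<^sup>2 / (2 * \<gamma>)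
      = - inner (p - a) (gradf p) + \<gamma> / 2 * (norm (gradf p - gradf a))\<^sup>2"
    unfolding coupling_def x_z' z_a x_p using gamma_pos unfolding power2_norm_eq_inner
    by (simp add: inner_simps inner_commute field_simps)
  have "f a \<ge> f p - inner (p - a) (gradf p) + \<sigma> / 2 * (norm (p - a))\<^sup>2"
    using grad_ineq[where u = a and v = p] by (simp add: norm_minus_commute inner_diff_right inner_commute)
  moreover have "\<gamma> / 2 * (norm (gradf p - gradf a))\<^sup>2 \<le> \<gamma> / 2 * (L\<^sup>2 * (norm (p - a))\<^sup>2)"
    using gradf_Lipschitz[of p a] gamma_pos
    by (intro mult_left_mono) (auto simp flip: power_mult_distrib intro: power_mono)
  moreover have "descent_rate * (norm (p - a))\<^sup>2
      = \<sigma> / 2 * (norm (p - a))\<^sup>2 - \<gamma> / 2 * (L\<^sup>2 * (norm (p - a))\<^sup>2)"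
    unfolding descent_rate_def by (simp add: field_simps)
  ultimately show ?thesis
    using identity prox unfolding merit_value_def iterate_def y_increment_def a_def p_def z'_def
    by linarith
qed

definition merit_subgradient :: "nat \<Rightarrow> 'a \<times> 'a \<times> 'a" where
  "merit_subgradient k = (0, (- 2 / \<gamma>) *\<^sub>R (z k - y k), (1 / \<gamma>) *\<^sub>R (z k - y k))"

lemma merit_quadratic_minorant:
  "ereal (merit_value (Suc t) + inner (merit_subgradient (Suc t)) (u - iterate (Suc t))
      - 11 / \<gamma> * (norm (u - iterate (Suc t)))\<^sup>2)
     \<le> merit f g \<gamma> u"
proof -
  obtain uy uz ux where u: "u = (uy, uz, ux)" by (cases u) auto
  define p where "p = y (Suc t)"
  define zz where "zz = z (Suc t)"
  define N where "N = norm (u - iterate (Suc t))"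
  define slack where
    "slack = ((norm (2 *\<^sub>R p - x t - zz))\<^sup>2 - (norm (2 *\<^sub>R p - x t - uz))\<^sup>2) / (2 * \<gamma>)"
  have x_p: "x t = p + \<gamma> *\<^sub>R gradf p" using x_eq[of t] unfolding p_def .
  have x_zz: "x (Suc t) = x t + 2 *\<^sub>R (zz - p)" using x_step[of t] unfolding p_def zz_def .
  have iterate_eq: "iterate (Suc t) = (p, zz, x (Suc t))" unfolding iterate_def p_def zz_def ..
  have subgradient_eq: "merit_subgradient (Suc t) = (0, (- 2 / \<gamma>) *\<^sub>R (zz - p), (1 / \<gamma>) *\<^sub>R (zz - p))"
    unfolding merit_subgradient_def p_def zz_def ..
  have prox: "ereal (gz (Suc t) + slack) \<le> g uz"
    using z_step_lower_bound[of t uz] unfolding slack_def p_def zz_def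
    by (simp add: diff_divide_distrib add_diff_eq)
  have "0 \<le> \<sigma> / 2 * (norm (uy - p))\<^sup>2" using sigma_pos by simp
  then have "f uy \<ge> f p + inner (gradf p) (uy - p)"
    using grad_ineq[where u = uy and v = p] by linarith
  moreover have "coupling \<gamma> u + slack = coupling \<gamma> (iterate (Suc t)) - inner (gradf p) (uy - p)
      + inner (merit_subgradient (Suc t)) (u - iterate (Suc t)) + coupling \<gamma> (u - iterate (Suc t))
      - (norm (uz - zz))\<^sup>2 / (2 * \<gamma>)"
    unfolding slack_def u iterate_eq subgradient_eq coupling_def x_zz x_p using gamma_pos
    unfolding power2_norm_eq_inner by (simp add: inner_simps inner_commute field_simps)
  moreover have "coupling \<gamma> (u - iterate (Suc t)) \<ge> - (10 / \<gamma> * N\<^sup>2)"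
    unfolding N_def by (rule coupling_lower_bound[OF gamma_pos])
  moreover have "norm (uz - zz) \<le> N"
    using order_trans[OF norm_fst_le[of "uz - zz" "ux - x (Suc t)"] norm_snd_le[of "(uz - zz, ux - x (Suc t))" "uy - p"]]
    unfolding N_def u iterate_eq by simp
  then have "(norm (uz - zz))\<^sup>2 \<le> N\<^sup>2" by (simp add: power_mono)
  then have "(norm (uz - zz))\<^sup>2 \<le> 2 * N\<^sup>2" using zero_le_power2[of N] by linarith
  then have "(norm (uz - zz))\<^sup>2 / (2 * \<gamma>) \<le> 1 / \<gamma> * N\<^sup>2"
    using gamma_pos by (simp add: field_simps)
  moreover have "11 / \<gamma> * N\<^sup>2 = 10 / \<gamma> * N\<^sup>2 + 1 / \<gamma> * N\<^sup>2"
    by (simp add: field_simps)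
  moreover have "merit_value (Suc t) = f p + coupling \<gamma> (iterate (Suc t)) + gz (Suc t)"
    unfolding merit_value_def p_def ..
  ultimately have "merit_value (Suc t) + inner (merit_subgradient (Suc t)) (u - iterate (Suc t)) - 11 / \<gamma> * N\<^sup>2
      \<le> (f uy + coupling \<gamma> u) + (gz (Suc t) + slack)"
    by linarith
  then have "ereal (merit_value (Suc t) + inner (merit_subgradient (Suc t)) (u - iterate (Suc t)) - 11 / \<gamma> * N\<^sup>2)
      \<le> ereal (f uy + coupling \<gamma> u) + ereal (gz (Suc t) + slack)"
    by simp
  also have "\<dots> \<le> ereal (f uy + coupling \<gamma> u) + g uz"
    using prox by (rule add_left_mono)
  also have "\<dots> = merit f g \<gamma> u" unfolding u merit_eq_coupling ..
  finally show ?thesis unfolding N_def .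
qed

lemma merit_subgradient_frechet: "merit_subgradient (Suc t) \<in> frechet_subdiff (merit f g \<gamma>) (iterate (Suc t))"
  unfolding frechet_subdiff_def merit_iterate
proof (intro CollectI conjI allI impI)
  fix \<epsilon> :: real assume "0 < \<epsilon>"
  show "\<exists>\<delta>>0. \<forall>u. norm (u - iterate (Suc t)) < \<delta> \<longrightarrow>
      ereal (merit_value (Suc t)) + ereal (inner (merit_subgradient (Suc t)) (u - iterate (Suc t)) - \<epsilon> * norm (u - iterate (Suc t)))
        \<le> merit f g \<gamma> u"
  proof (intro exI conjI allI impI)
    show "0 < \<epsilon> * \<gamma> / 11" using \<open>0 < \<epsilon>\<close> gamma_pos by simp
    fix u assume "norm (u - iterate (Suc t)) < \<epsilon> * \<gamma> / 11"
    then have "11 / \<gamma> * norm (u - iterate (Suc t)) \<le> \<epsilon>" using gamma_pos by (simp add: field_simps)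
    then have "11 / \<gamma> * norm (u - iterate (Suc t)) * norm (u - iterate (Suc t)) \<le> \<epsilon> * norm (u - iterate (Suc t))"
      by (rule mult_right_mono) simp
    then have "11 / \<gamma> * (norm (u - iterate (Suc t)))\<^sup>2 \<le> \<epsilon> * norm (u - iterate (Suc t))"
      by (simp add: power2_eq_square mult.assoc)
    then have "ereal (merit_value (Suc t)) + ereal (inner (merit_subgradient (Suc t)) (u - iterate (Suc t)) - \<epsilon> * norm (u - iterate (Suc t)))
        \<le> ereal (merit_value (Suc t) + inner (merit_subgradient (Suc t)) (u - iterate (Suc t)) - 11 / \<gamma> * (norm (u - iterate (Suc t)))\<^sup>2)"
      by simp
    then show "ereal (merit_value (Suc t)) + ereal (inner (merit_subgradient (Suc t)) (u - iterate (Suc t)) - \<epsilon> * norm (u - iterate (Suc t)))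
        \<le> merit f g \<gamma> u"
      using merit_quadratic_minorant by (rule order_trans)
  qed
qed simp

lemma x_diff_bound: "norm (x (Suc k) - x k) \<le> (1 + \<gamma> * L) * y_increment (Suc k)"
proof -
  have "x (Suc k) - x k = (y (Suc (Suc k)) - y (Suc k)) + \<gamma> *\<^sub>R (gradf (y (Suc (Suc k))) - gradf (y (Suc k)))"
    using x_eq[of k] x_eq[of "Suc k"] by (simp add: algebra_simps)
  then have "norm (x (Suc k) - x k) \<le> y_increment (Suc k) + \<gamma> * norm (gradf (y (Suc (Suc k))) - gradf (y (Suc k)))"
    using norm_triangle_ineq gamma_pos unfolding y_increment_def by (metis abs_of_pos norm_scaleR)
  also have "\<dots> \<le> y_increment (Suc k) + \<gamma> * (L * y_increment (Suc k))"
    using gradf_Lipschitz gamma_pos unfolding y_increment_def by (intro add_left_mono mult_left_mono) auto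
  finally show ?thesis by (simp add: algebra_simps)
qed

lemma merit_subgradient_bound:
  "norm (merit_subgradient (Suc t)) \<le> 3 / (2 * \<gamma>) * (1 + \<gamma> * L) * y_increment (Suc t)"
proof -
  define w where "w = z (Suc t) - y (Suc t)"
  have "norm (merit_subgradient (Suc t)) = norm ((- 2 / \<gamma>) *\<^sub>R w, (1 / \<gamma>) *\<^sub>R w)"
    unfolding merit_subgradient_def w_def by (simp add: norm_Pair)
  also have "\<dots> \<le> norm ((- 2 / \<gamma>) *\<^sub>R w) + norm ((1 / \<gamma>) *\<^sub>R w)" by (rule norm_Pair_le)
  also have "\<dots> = 3 / (2 * \<gamma>) * norm (x (Suc t) - x t)"
    using gamma_pos unfolding w_def z_eq by simp
  also have "\<dots> \<le> 3 / (2 * \<gamma>) * ((1 + \<gamma> * L) * y_increment (Suc t))"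
    using x_diff_bound gamma_pos by (intro mult_left_mono) auto
  finally show ?thesis by (simp only: mult.assoc)
qed

lemma iterate_diff_bound:
  "norm (iterate (Suc (Suc t)) - iterate (Suc t))
     \<le> (3 + 2 * \<gamma> * L) * (y_increment (Suc t) + y_increment (Suc (Suc t)))"
proof -
  define dx1 dx2 where "dx1 = x (Suc t) - x t" and "dx2 = x (Suc (Suc t)) - x (Suc t)"
  have "z (Suc (Suc t)) - z (Suc t) = (y (Suc (Suc t)) - y (Suc t)) + (1 / 2) *\<^sub>R dx2 - (1 / 2) *\<^sub>R dx1"
    unfolding z_eq dx1_def dx2_def by (simp add: algebra_simps)
  then have dz: "norm (z (Suc (Suc t)) - z (Suc t)) \<le> y_increment (Suc t) + norm dx2 / 2 + norm dx1 / 2"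
    using norm_triangle_ineq4[of "(y (Suc (Suc t)) - y (Suc t)) + (1 / 2) *\<^sub>R dx2" "(1 / 2) *\<^sub>R dx1"]
      norm_triangle_ineq[of "y (Suc (Suc t)) - y (Suc t)" "(1 / 2) *\<^sub>R dx2"]
    unfolding y_increment_def by simp
  have "norm (iterate (Suc (Suc t)) - iterate (Suc t))
      \<le> y_increment (Suc t) + (norm (z (Suc (Suc t)) - z (Suc t)) + norm dx2)"
    using norm_Pair_le[of "y (Suc (Suc t)) - y (Suc t)" "(z (Suc (Suc t)) - z (Suc t), dx2)"]
      norm_Pair_le[of "z (Suc (Suc t)) - z (Suc t)" dx2]
    unfolding iterate_def y_increment_def dx2_def by simp
  also have "\<dots> \<le> y_increment (Suc t) + (y_increment (Suc t) + (1 + \<gamma> * L) * y_increment (Suc (Suc t)) / 2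
      + (1 + \<gamma> * L) * y_increment (Suc t) / 2 + (1 + \<gamma> * L) * y_increment (Suc (Suc t)))"
    using dz x_diff_bound[of t] x_diff_bound[of "Suc t"] unfolding dx1_def dx2_def by linarith
  also have "\<dots> \<le> (3 + 2 * \<gamma> * L) * (y_increment (Suc t) + y_increment (Suc (Suc t)))"
  proof -
    define g1 g2 where "g1 = \<gamma> * L * y_increment (Suc t)" and "g2 = \<gamma> * L * y_increment (Suc (Suc t))"
    have "0 \<le> y_increment (Suc t)" "0 \<le> y_increment (Suc (Suc t))" "0 \<le> g1" "0 \<le> g2"
      using gamma_pos L_pos unfolding g1_def g2_def y_increment_def by simp_all
    moreover have "(1 + \<gamma> * L) * y_increment (Suc t) = y_increment (Suc t) + g1"
      "(1 + \<gamma> * L) * y_increment (Suc (Suc t)) = y_increment (Suc (Suc t)) + g2"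
      "(3 + 2 * \<gamma> * L) * (y_increment (Suc t) + y_increment (Suc (Suc t))) = 3 * y_increment (Suc t) + 3 * y_increment (Suc (Suc t)) + 2 * g1 + 2 * g2"
      unfolding g1_def g2_def by (simp_all add: algebra_simps)
    ultimately show ?thesis by linarith
  qed
  finally show ?thesis .
qed

lemma merit_value_tendsto_at_cluster_point:
  assumes lim: "(\<lambda>j. iterate (Suc (r j))) \<longlonglongrightarrow> (ys, zs, xs)"
  shows "\<exists>hs. (\<lambda>j. merit_value (Suc (r j))) \<longlonglongrightarrow> hs \<and> merit f g \<gamma> (ys, zs, xs) = ereal hs"
proof -
  have y_lim: "(\<lambda>j. y (Suc (r j))) \<longlonglongrightarrow> ys" and z_lim: "(\<lambda>j. z (Suc (r j))) \<longlonglongrightarrow> zs"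
    using tendsto_fst[OF lim] tendsto_fst[OF tendsto_snd[OF lim]] unfolding iterate_def by simp_all
  have "L-lipschitz_on UNIV gradf"
    by (rule lipschitz_onI) (use gradf_Lipschitz L_pos in \<open>auto simp: dist_norm\<close>)
  then have "isCont gradf ys"
    using lipschitz_on_continuous_on continuous_on_eq_continuous_at by blast
  then have "(\<lambda>j. 2 *\<^sub>R y (Suc (r j)) - x (r j)) \<longlonglongrightarrow> 2 *\<^sub>R ys - (ys + \<gamma> *\<^sub>R gradf ys)"
    unfolding x_eq by (intro tendsto_intros y_lim isCont_tendsto_compose[of ys gradf])
  from prox_values_tendsto[OF g_lsc g_proper z_lim this g_z_eq z_step[unfolded g_z_eq plus_ereal.simps]]
  obtain gs where gs: "g zs = ereal gs" "(\<lambda>j. gz (Suc (r j))) \<longlonglongrightarrow> gs" by blast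
  have "isCont f ys" using has_derivative_continuous[OF f_grad] by simp
  then have "(\<lambda>j. merit_value (Suc (r j))) \<longlonglongrightarrow> f ys + coupling \<gamma> (ys, zs, xs) + gs"
    unfolding merit_value_def
    by (intro tendsto_intros gs(2) isCont_tendsto_compose[OF _ y_lim] isCont_tendsto_compose[OF _ lim]
        isCont_coupling)
  moreover have "merit f g \<gamma> (ys, zs, xs) = ereal (f ys + coupling \<gamma> (ys, zs, xs) + gs)"
    unfolding merit_eq_coupling gs(1) by simp
  ultimately show ?thesis by blast
qed

theorem convergent_if_cluster_point:
  assumes KL: "KL_function (merit f g \<gamma>)" and r: "strict_mono r"
    and lim: "(\<lambda>j. iterate (Suc (r j))) \<longlonglongrightarrow> (ys, zs, xs)"
  shows "convergent (\<lambda>t. iterate (Suc t))"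
proof -
  interpret KL_descent "merit f g \<gamma>" "\<lambda>k. iterate (Suc k)" "\<lambda>k. merit_subgradient (Suc k)"
    "\<lambda>k. merit_value (Suc k)" "\<lambda>k. y_increment (Suc k)"
    descent_rate "3 / (2 * \<gamma>) * (1 + \<gamma> * L)" "3 + 2 * \<gamma> * L"
  proof
    show "0 < 3 / (2 * \<gamma>) * (1 + \<gamma> * L)" "0 \<le> 3 + 2 * \<gamma> * L"
      using gamma_pos L_pos by (simp_all add: add_pos_pos)
  qed (use descent_rate_pos merit_iterate merit_value_descent merit_subgradient_frechet
      merit_subgradient_bound iterate_diff_bound in \<open>simp_all add: y_increment_def\<close>)
  obtain hs where "(\<lambda>j. merit_value (Suc (r j))) \<longlonglongrightarrow> hs" "merit f g \<gamma> (ys, zs, xs) = ereal hs"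
    using merit_value_tendsto_at_cluster_point[OF lim] by blast
  then show ?thesis using convergent_if_KL_cluster_point[OF KL r lim] by blast
qed

end

theorem theorem3:
  fixes f :: "'a::euclidean_space \<Rightarrow> real"
    and gradf :: "'a \<Rightarrow> 'a"
    and g :: "'a \<Rightarrow> ereal"
    and \<sigma> L \<gamma> :: real
    and y z x :: "nat \<Rightarrow> 'a"
    and ystar zstar xstar :: 'a
  assumes sigma_pos: "\<sigma> > 0" and L_pos: "L > 0"
    and f_grad: "\<And>u. (f has_derivative (\<lambda>h. inner (gradf u) h)) (at u)"
    and f_strongly_convex: "convex_on UNIV (\<lambda>u. f u - \<sigma> / 2 * (norm u)\<^sup>2)"
    and gradf_Lipschitz: "\<And>u v. norm (gradf u - gradf v) \<le> L * norm (u - v)"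
    and g_proper: "proper_fun g" and g_lsc: "lsc_fun g"
    and prox_nonempty: "\<And>w. \<exists>u. \<forall>u'. ereal \<gamma> * g u + ereal ((norm (u - w))\<^sup>2 / 2)
                                      \<le> ereal \<gamma> * g u' + ereal ((norm (u' - w))\<^sup>2 / 2)"
    and L_sigma: "3 * \<sigma> > 2 * L"
    and gamma_pos: "0 < \<gamma>" and gamma_bound: "\<gamma> < (3 * \<sigma> - 2 * L) / L\<^sup>2"
    and y_step: "\<And>t u. f (y (Suc t)) + (norm (y (Suc t) - x t))\<^sup>2 / (2 * \<gamma>)
                        \<le> f u + (norm (u - x t))\<^sup>2 / (2 * \<gamma>)"
    and z_step: "\<And>t u. g (z (Suc t)) + ereal ((norm (2 *\<^sub>R y (Suc t) - x t - z (Suc t)))\<^sup>2 / (2 * \<gamma>))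
                        \<le> g u + ereal ((norm (2 *\<^sub>R y (Suc t) - x t - u))\<^sup>2 / (2 * \<gamma>))"
    and x_step: "\<And>t. x (Suc t) = x t + 2 *\<^sub>R (z (Suc t) - y (Suc t))"
    and cluster: "\<exists>r. strict_mono r \<and>
                    ((\<lambda>t. (y (Suc (r t)), z (Suc (r t)), x (Suc (r t)))) \<longlonglongrightarrow> (ystar, zstar, xstar))"
    and KL: "KL_function (merit f g \<gamma>)"
  shows "convergent (\<lambda>t. (y (Suc t), z (Suc t), x (Suc t)))"
proof -
  interpret PR_iteration f gradf g \<sigma> L \<gamma> y z x
    by unfold_locales (fact sigma_pos L_pos f_grad f_strongly_convex gradf_Lipschitz g_proper g_lsc
        gamma_pos gamma_bound y_step z_step x_step)+
  obtain r where "strict_mono r" and "(\<lambda>t. iterate (Suc (r t))) \<longlonglongrightarrow> (ystar, zstar, xstar)"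
    using cluster unfolding iterate_def by blast
  from convergent_if_cluster_point[OF KL this] show ?thesis unfolding iterate_def .
qed

end
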